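(* For every $h>0$, $$\widetilde\psi(h):=\inf_{b_1,b_2>0}\big\{-(b_1+b_2)\ln(1-p)+\psi(h,b_1,b_2)\big\}=\big(\kappa_\ell(p)+\kappa_r(p)\big)h.$$
   Context: Setting: $(\omega_x^+)_{x\in\mathbb{Z}}$ i.i.d. with law $\mu$, $\omega_x^+\in[\varepsilon_0,1-\varepsilon_0]$ for some $\varepsilon_0>0$, $\omega_x^-=1-\omega_x^+$, $\rho_i=\omega_i^-/\omega_i^+$, $\mathbf{E}$ expectation under $\mu$; strict nestling: $\inf\{a:\mu(\omega_0^+\le a)>0\}<1/2<\sup\{a:\mu(\omega_0^+\ge a)>0\}$; $p\in(0,1)$. $\psi(h,b_1,b_2)=\sup_{\lambda>0}\{\lambda h-b_2\ln\mathbf{E}(\rho_0^\lambda)\}+\sup_{\lambda>0}\{\lambda h-b_1\ln\mathbf{E}(\rho_0^{-\lambda})\}$. $\kappa_\ell(p)>0$ and $\kappa_r(p)>0$ are the unique positive solutions of $\mathbf{E}(\rho_0^{-\kappa_\ell})=\frac{1}{1-p}$ and $\mathbf{E}(\rho_0^{\kappa_r})=\frac{1}{1-p}$. *)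

theory Defs
  imports "HOL-Probability.Probability"
begin

text \<open>The law mu of omega_0^+ is a probability measure on the reals (Borel sets).
  rho = omega^- / omega^+ = (1 - omega) / omega.\<close>

definition rho :: "real \<Rightarrow> real" where
  "rho w = (1 - w) / w"

definition Erho :: "real measure \<Rightarrow> real \<Rightarrow> real" where
  "Erho mu l = (\<integral>w. rho w powr l \<partial>mu)"

definition psi :: "real measure \<Rightarrow> real \<Rightarrow> real \<Rightarrow> real \<Rightarrow> ereal" where
  "psi mu h b1 b2 =
     (SUP l\<in>{0<..}. ereal (l * h - b2 * ln (Erho mu l)))
   + (SUP l\<in>{0<..}. ereal (l * h - b1 * ln (Erho mu (- l))))"

definition psi_tilde :: "real measure \<Rightarrow> real \<Rightarrow> real \<Rightarrow> ereal" where
  "psi_tilde mu p h =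
     (INF b\<in>{0<..} \<times> {0<..}. ereal (- (fst b + snd b) * ln (1 - p)) + psi mu h (fst b) (snd b))"

definition kappa_l :: "real measure \<Rightarrow> real \<Rightarrow> real" where
  "kappa_l mu p = (THE k. k > 0 \<and> Erho mu (- k) = 1 / (1 - p))"

definition kappa_r :: "real measure \<Rightarrow> real \<Rightarrow> real" where
  "kappa_r mu p = (THE k. k > 0 \<and> Erho mu k = 1 / (1 - p))"

end

theory Submission imports Defs begin

(*
  Write F(l) = E(rho_0^l).  Ellipticity keeps rho_0 in a compact interval of
  (0,\<infinity>), so F is finite, convex (l \<mapsto> y^l is log-linear), F(0) = 1, and strict nestling
  makes F(l) \<rightarrow> \<infinity> as l \<rightarrow> \<infinity> (and likewise F(-l)).  Hence for a = 1/(1-p) > 1 the level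
  set {l > 0. F(l) = a} is a single point kappa_r (resp. kappa_l for l \<mapsto> F(-l)), and the
  inequality e^x \<ge> 1 + x gives a supporting line  ln F(l) \<ge> ln a + (l - kappa) m  with m > 0.
  With c = -ln(1-p) = ln a, the Legendre-type supremum in psi is then \<ge> kappa h - b c for
  every b > 0 (take l = kappa) and equal to it for b = h/m (the supporting line).  Summing the
  two halves, -(b1+b2) ln(1-p) + psi(h,b1,b2) \<ge> (kappa_l + kappa_r) h always, with equality
  at b1 = h/m_l, b2 = h/m_r, which is the claim.
*)

section \<open>Power moments of a random variable bounded away from 0 and \<infinity>\<close>

lemma powr_between:
  fixes y c1 c2 l :: real
  assumes "0 < c1" "c1 \<le> y" "y \<le> c2"
  shows "min (c1 powr l) (c2 powr l) \<le> y powr l \<and> y powr l \<le> max (c1 powr l) (c2 powr l)"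
proof (cases "l \<ge> 0")
  case True
  then have "c1 powr l \<le> y powr l" "y powr l \<le> c2 powr l"
    using assms by (auto intro!: powr_mono2)
  then show ?thesis by linarith
next
  case False
  then have "c2 powr l \<le> y powr l" "y powr l \<le> c1 powr l"
    using assms by (auto intro!: powr_mono2')
  then show ?thesis by linarith
qed

text \<open>If F(0) = 1, F is convex and a > 1, then the level set {l > 0. F l = a} has at most
  one point: a second point would lie strictly between 0 and the first one.\<close>
lemma convex_level_above_one_unique:
  fixes F :: "real \<Rightarrow> real"
  assumes conv: "convex_on UNIV F" and F0: "F 0 = 1" and a: "1 < a"
    and u: "0 < u" "F u = a" and v: "0 < v" "F v = a"
  shows "u = v"
proof (rule ccontr)
  have no_two: False if "0 < s" "s < t" "F s = a" "F t = a" for s t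
  proof -
    define \<theta> where "\<theta> = s / t"
    have \<theta>: "0 < \<theta>" "\<theta> < 1" using that by (auto simp: \<theta>_def)
    have "F ((1 - \<theta>) *\<^sub>R 0 + \<theta> *\<^sub>R t) \<le> (1 - \<theta>) * F 0 + \<theta> * F t"
      using \<theta> by (intro convex_onD[OF conv]) auto
    moreover have "(1 - \<theta>) *\<^sub>R 0 + \<theta> *\<^sub>R t = s" using that by (simp add: \<theta>_def)
    ultimately have "(1 - \<theta>) * a \<le> (1 - \<theta>) * 1" using that F0 by (simp add: algebra_simps)
    then show False using \<theta> a by simp
  qed
  assume "u \<noteq> v"
  then show False using no_two[of u v] no_two[of v u] u v by linarith
qed

locale bounded_positive_rv = prob_space M for M :: "'a measure" +
  fixes Y :: "'a \<Rightarrow> real" and c1 c2 :: real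
  assumes Y_measurable [measurable]: "Y \<in> borel_measurable M"
    and c1_pos: "0 < c1"
    and Y_bounds: "AE w in M. c1 \<le> Y w \<and> Y w \<le> c2"
begin

definition moment :: "real \<Rightarrow> real" where
  "moment l = (\<integral>w. Y w powr l \<partial>M)"

lemma Y_pos: "AE w in M. 0 < Y w"
  using Y_bounds by eventually_elim (use c1_pos in auto)

lemma integrable_powr [simp]: "integrable M (\<lambda>w. Y w powr l)"
proof (rule integrable_const_bound[where B = "max (c1 powr l) (c2 powr l)"])
  show "AE w in M. norm (Y w powr l) \<le> max (c1 powr l) (c2 powr l)"
    using Y_bounds by eventually_elim (use c1_pos powr_between in auto)
qed measurable

text \<open>Y^l ln Y is integrable too; its integral gives the slope of the supporting line below.\<close>
lemma integrable_powr_ln [simp]: "integrable M (\<lambda>w. Y w powr l * ln (Y w))"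
proof (rule integrable_const_bound
    [where B = "max (c1 powr l) (c2 powr l) * (\<bar>ln c1\<bar> + \<bar>ln c2\<bar>)"])
  show "AE w in M. norm (Y w powr l * ln (Y w)) \<le> max (c1 powr l) (c2 powr l) * (\<bar>ln c1\<bar> + \<bar>ln c2\<bar>)"
    using Y_bounds
  proof eventually_elim
    case (elim w)
    then have "0 < Y w" using c1_pos by linarith
    have pow: "\<bar>Y w powr l\<bar> \<le> max (c1 powr l) (c2 powr l)"
      using powr_between[of c1 "Y w" c2 l] elim c1_pos by auto
    have "ln c1 \<le> ln (Y w)" "ln (Y w) \<le> ln c2" using elim c1_pos \<open>0 < Y w\<close> by auto
    then have "\<bar>ln (Y w)\<bar> \<le> \<bar>ln c1\<bar> + \<bar>ln c2\<bar>" by linarith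
    with pow show ?case unfolding real_norm_def abs_mult
      by (rule mult_mono) (auto intro: max.coboundedI1)
  qed
qed measurable

lemma moment_pos: "0 < moment l"
proof -
  have "AE w in M. c1 \<le> c2" using Y_bounds by eventually_elim auto
  then have "c1 \<le> c2" by simp
  then have "0 < min (c1 powr l) (c2 powr l)" using c1_pos by simp
  also have "\<dots> \<le> moment l" unfolding moment_def
    by (rule integral_ge_const) (use Y_bounds c1_pos powr_between in \<open>auto\<close>)
  finally show ?thesis .
qed

lemma moment_zero: "moment 0 = 1"
proof -
  have "moment 0 = (\<integral>w. 1 \<partial>M)" unfolding moment_def
    by (rule integral_cong_AE) (use Y_pos in auto)
  then show ?thesis by (simp add: prob_space)
qed

text \<open>Convexity is inherited pointwise from the convexity of l \<mapsto> y^l = exp (l ln y).\<close>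
lemma moment_convex: "convex_on UNIV moment"
proof (rule convex_onI)
  fix t x z :: real assume t: "0 < t" "t < 1"
  have "moment ((1 - t) *\<^sub>R x + t *\<^sub>R z) \<le> (\<integral>w. (1 - t) * Y w powr x + t * Y w powr z \<partial>M)"
    unfolding moment_def
  proof (rule integral_mono_AE)
    show "AE w in M. Y w powr ((1 - t) *\<^sub>R x + t *\<^sub>R z) \<le> (1 - t) * Y w powr x + t * Y w powr z"
      using Y_pos
    proof eventually_elim
      case (elim w)
      have "exp ((1 - t) *\<^sub>R (x * ln (Y w)) + t *\<^sub>R (z * ln (Y w)))
            \<le> (1 - t) * exp (x * ln (Y w)) + t * exp (z * ln (Y w))"
        using t by (intro convex_onD[OF exp_convex]) auto
      then show ?case using elim by (simp add: powr_def algebra_simps)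
    qed
  qed auto
  also have "\<dots> = (1 - t) * moment x + t * moment z" unfolding moment_def by simp
  finally show "moment ((1 - t) *\<^sub>R x + t *\<^sub>R z) \<le> (1 - t) * moment x + t * moment z" .
qed simp

lemma moment_continuous: "continuous_on UNIV moment"
  by (rule convex_on_continuous[OF open_UNIV moment_convex])

text \<open>Supporting line of ln moment at k, with slope E(Y^k ln Y)/E(Y^k).  It follows from
  Y^l = Y^k exp((l-k) ln Y) and e^x \<ge> 1 + x, integrated against M.\<close>
lemma log_moment_supporting_line:
  fixes k l :: real
  defines "m \<equiv> (\<integral>w. Y w powr k * ln (Y w) \<partial>M) / moment k"
  shows "ln (moment k) + (l - k) * m \<le> ln (moment l)"
proof -
  define t where "t = l - k"
  have pointwise: "Y w powr k + t * (Y w powr k * ln (Y w)) - t * m * Y w powr k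
                     \<le> Y w powr l * exp (- (t * m))" if "0 < Y w" for w
  proof -
    have "Y w powr k * (1 + (t * ln (Y w) - t * m)) \<le> Y w powr k * exp (t * ln (Y w) - t * m)"
      using that by (intro mult_left_mono exp_ge_add_one_self) auto
    also have "\<dots> = exp (l * ln (Y w) - t * m)"
      using that by (simp add: powr_def t_def exp_add[symmetric] algebra_simps)
    also have "\<dots> = Y w powr l * exp (- (t * m))"
      using that by (simp add: powr_def exp_add[symmetric])
    finally show ?thesis by (simp add: algebra_simps)
  qed
  have "moment k = (\<integral>w. Y w powr k + t * (Y w powr k * ln (Y w)) - t * m * Y w powr k \<partial>M)"
    using moment_pos[of k] by (simp add: moment_def m_def)
  also have "\<dots> \<le> (\<integral>w. Y w powr l * exp (- (t * m)) \<partial>M)"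
    by (rule integral_mono_AE) (use Y_pos pointwise in \<open>auto\<close>)
  also have "\<dots> = moment l * exp (- (t * m))" unfolding moment_def by simp
  finally have "moment k * exp (t * m) \<le> moment l" by (simp add: exp_minus field_simps)
  then have "ln (moment k * exp (t * m)) \<le> ln (moment l)"
    using moment_pos[of k] moment_pos[of l] by simp
  then show ?thesis using moment_pos[of k] by (simp add: ln_mult t_def)
qed

text \<open>If Y exceeds q > 1 on an event of positive probability, the moments are unbounded:
  moment L \<ge> P(A) q^L.\<close>
lemma moment_exceeds:
  assumes A: "A \<in> sets M" "0 < prob A" and q: "1 < q"
    and Aq: "AE w in M. w \<in> A \<longrightarrow> q \<le> Y w"
  obtains L where "0 \<le> L" "a \<le> moment L"
proof -
  define L where "L = max 0 (log q (a / prob A))"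
  have "a / prob A \<le> q powr L"
  proof (cases "0 < a")
    case True
    then have "a / prob A = q powr (log q (a / prob A))" using A q by simp
    also have "\<dots> \<le> q powr L" using q unfolding L_def by (intro powr_mono) auto
    finally show ?thesis .
  next
    case False
    then have "a / prob A \<le> 0" using A by (simp add: divide_nonpos_pos)
    then show ?thesis by (meson order.trans powr_ge_zero)
  qed
  then have "a \<le> prob A * q powr L" using A by (simp add: field_simps)
  also have "\<dots> = (\<integral>w. indicator A w * q powr L \<partial>M)" using A by simp
  also have "\<dots> \<le> moment L" unfolding moment_def
  proof (rule integral_mono_AE)
    show "AE w in M. indicator A w * q powr L \<le> Y w powr L"
      using Aq Y_pos by eventually_elim (use q in \<open>auto simp: L_def indicator_def intro!: powr_mono2\<close>)
  qed (use A in \<open>auto simp: top.not_eq_extremum[symmetric]\<close>)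
  finally show ?thesis using that[of L] by (simp add: L_def)
qed

lemma moment_level:
  assumes A: "A \<in> sets M" "0 < prob A" and q: "1 < q"
    and Aq: "AE w in M. w \<in> A \<longrightarrow> q \<le> Y w" and a: "1 < a"
  obtains k m where "0 < k" "moment k = a" "\<And>k'. 0 < k' \<Longrightarrow> moment k' = a \<Longrightarrow> k' = k"
    and "0 < m" "\<And>l. ln a + (l - k) * m \<le> ln (moment l)"
proof -
  obtain L where L: "0 \<le> L" "a \<le> moment L" using moment_exceeds[OF A q Aq] .
  obtain k where k: "0 \<le> k" "k \<le> L" "moment k = a"
    using IVT'[of moment 0 a L] moment_zero a L continuous_on_subset[OF moment_continuous]
    by force
  have k_pos: "0 < k" using k moment_zero a by (cases "k = 0") auto
  define m where "m = (\<integral>w. Y w powr k * ln (Y w) \<partial>M) / moment k"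
  have line: "ln a + (l - k) * m \<le> ln (moment l)" for l
    using log_moment_supporting_line[of k l] k(3) by (simp add: m_def)
  text \<open>At l = 0 the line gives ln a - k m \<le> 0, hence m > 0.\<close>
  have "ln a \<le> k * m" using line[of 0] moment_zero by simp
  then have "0 < k * m" using ln_gt_zero[OF a] by linarith
  then have "0 < m" using k_pos zero_less_mult_pos by blast
  show ?thesis
  proof (rule that[OF k_pos k(3) _ \<open>0 < m\<close> line])
    show "k' = k" if "0 < k'" "moment k' = a" for k'
      using convex_level_above_one_unique[OF moment_convex moment_zero a] that k_pos k(3)
      by blast
  qed
qed

end

section \<open>The Legendre-type suprema in psi\<close>

lemma legendre_sup_lower:
  fixes G :: "real \<Rightarrow> real"
  assumes "0 < k" "G k = c"
  shows "ereal (k * h - b * c) \<le> (SUP l\<in>{0<..}. ereal (l * h - b * G l))"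
  by (rule SUP_upper2[of k]) (use assms in auto)

text \<open>If G has the supporting line c + (l - k) m at k, then for b = h/m the function
  l h - b G l is maximised at l = k, so the bound above is attained.\<close>
lemma legendre_sup_at_slope:
  fixes G :: "real \<Rightarrow> real"
  assumes m: "0 < m" and line: "\<And>l. c + (l - k) * m \<le> G l" and h: "0 < h"
  shows "(SUP l\<in>{0<..}. ereal (l * h - (h / m) * G l)) \<le> ereal (k * h - (h / m) * c)"
proof (rule SUP_least)
  fix l :: real
  have "(h / m) * (c + (l - k) * m) \<le> (h / m) * G l"
    using m h line by (intro mult_left_mono) auto
  then have "l * h - (h / m) * G l \<le> k * h - (h / m) * c"
    using m by (simp add: field_simps)
  then show "ereal (l * h - (h / m) * G l) \<le> ereal (k * h - (h / m) * c)" by simp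
qed

text \<open>The variational formula, given the roots and supporting lines of both halves of psi:
  every admissible (b1, b2) gives at least (kl + kr) h, and (h/ml, h/mr) gives exactly that.\<close>
lemma psi_tilde_from_supporting_lines:
  fixes mu :: "real measure" and p h kl kr ml mr :: real
  defines "c \<equiv> - ln (1 - p)"
  assumes h: "0 < h" and pos: "0 < kl" "0 < kr" "0 < ml" "0 < mr"
    and root_l: "ln (Erho mu (- kl)) = c" and line_l: "\<And>l. c + (l - kl) * ml \<le> ln (Erho mu (- l))"
    and root_r: "ln (Erho mu kr) = c" and line_r: "\<And>l. c + (l - kr) * mr \<le> ln (Erho mu l)"
  shows "psi_tilde mu p h = ereal ((kl + kr) * h)"
proof -
  have split: "ereal ((kl + kr) * h)
      = ereal (- (b1 + b2) * ln (1 - p)) + (ereal (kr * h - b2 * c) + ereal (kl * h - b1 * c))"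
    for b1 b2 by (simp add: c_def algebra_simps)
  have lower: "ereal ((kl + kr) * h) \<le> ereal (- (b1 + b2) * ln (1 - p)) + psi mu h b1 b2"
    for b1 b2
    unfolding split[of b1 b2] psi_def
    by (intro add_mono order_refl legendre_sup_lower) (use pos root_l root_r in auto)
  have "psi_tilde mu p h \<le> ereal (- (h / ml + h / mr) * ln (1 - p)) + psi mu h (h / ml) (h / mr)"
    unfolding psi_tilde_def by (rule INF_lower2[of "(h / ml, h / mr)"]) (use h pos in auto)
  also have "\<dots> \<le> ereal ((kl + kr) * h)"
    unfolding split[of "h / ml" "h / mr"] psi_def
    by (intro add_mono order_refl legendre_sup_at_slope) (use h pos line_l line_r in auto)
  finally have upper: "psi_tilde mu p h \<le> ereal ((kl + kr) * h)" .
  have "ereal ((kl + kr) * h) \<le> psi_tilde mu p h"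
    unfolding psi_tilde_def by (rule INF_greatest) (rule lower)
  with upper show ?thesis by (rule antisym)
qed

section \<open>The ratio rho and the odds\<close>

lemma rho_antimono: "0 < u \<Longrightarrow> u \<le> v \<Longrightarrow> v < 1 \<Longrightarrow> rho v \<le> rho u"
  unfolding rho_def by (rule frac_le) auto

text \<open>The odds omega^+ / omega^- = 1/rho, increasing on [0, 1).\<close>
definition odds :: "real \<Rightarrow> real" where
  "odds w = w / (1 - w)"

lemma odds_mono: "0 \<le> u \<Longrightarrow> u \<le> v \<Longrightarrow> v < 1 \<Longrightarrow> odds u \<le> odds v"
  unfolding odds_def by (rule frac_le) auto

lemma rho_powr_minus: "0 < w \<Longrightarrow> w < 1 \<Longrightarrow> rho w powr (- l) = odds w powr l"
  by (simp add: rho_def odds_def powr_minus_divide powr_divide)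

section \<open>The uniformly elliptic environment law\<close>

locale elliptic_environment = prob_space mu for mu :: "real measure" +
  fixes eps0 :: real
  assumes sets_mu: "sets mu = sets borel"
    and eps0_pos: "0 < eps0"
    and ellipticity: "AE w in mu. eps0 \<le> w \<and> w \<le> 1 - eps0"
begin

lemma eps0_le_half: "eps0 \<le> 1 / 2"
proof -
  have "AE w in mu. eps0 \<le> 1 / 2" using ellipticity by eventually_elim auto
  then show ?thesis by simp
qed

lemma prob_full:
  assumes "X \<in> sets borel" "\<And>w. eps0 \<le> w \<Longrightarrow> w \<le> 1 - eps0 \<Longrightarrow> w \<in> X"
  shows "prob X = 1"
proof -
  have "AE w in mu. w \<in> X" using ellipticity by eventually_elim (use assms in auto)
  then show ?thesis using assms(1) sets_mu by (simp add: prob_eq_1)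
qed

lemma prob_null:
  assumes "X \<in> sets borel" "\<And>w. eps0 \<le> w \<Longrightarrow> w \<le> 1 - eps0 \<Longrightarrow> w \<notin> X"
  shows "prob X = 0"
proof -
  have "AE w in mu. w \<notin> X" using ellipticity by eventually_elim (use assms in auto)
  then show ?thesis using assms(1) sets_mu by (simp add: prob_eq_0)
qed

lemma rho_bounds: "AE w in mu. eps0 / (1 - eps0) \<le> rho w \<and> rho w \<le> (1 - eps0) / eps0"
  using ellipticity
proof eventually_elim
  case (elim w)
  then have "rho (1 - eps0) \<le> rho w" "rho w \<le> rho eps0"
    using eps0_pos eps0_le_half by (auto intro!: rho_antimono)
  then show ?case using eps0_pos by (simp add: rho_def)
qed

lemma odds_bounds: "AE w in mu. eps0 / (1 - eps0) \<le> odds w \<and> odds w \<le> (1 - eps0) / eps0"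
  using ellipticity
proof eventually_elim
  case (elim w)
  then have "odds eps0 \<le> odds w" "odds w \<le> odds (1 - eps0)"
    using eps0_pos eps0_le_half by (auto intro!: odds_mono)
  then show ?case by (simp add: odds_def)
qed

lemma rho_measurable [measurable]: "rho \<in> borel_measurable mu"
  unfolding measurable_cong_sets[OF sets_mu refl] rho_def by measurable

lemma odds_measurable [measurable]: "odds \<in> borel_measurable mu"
  unfolding measurable_cong_sets[OF sets_mu refl] odds_def by measurable

sublocale rho: bounded_positive_rv mu rho "eps0 / (1 - eps0)" "(1 - eps0) / eps0"
  by unfold_locales (use eps0_pos eps0_le_half rho_bounds in auto)

sublocale odds: bounded_positive_rv mu odds "eps0 / (1 - eps0)" "(1 - eps0) / eps0"
  by unfold_locales (use eps0_pos eps0_le_half odds_bounds in auto)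

lemma rho_moment: "rho.moment l = Erho mu l"
  by (simp add: rho.moment_def Erho_def)

lemma odds_moment: "odds.moment l = Erho mu (- l)"
  unfolding odds.moment_def Erho_def
proof (rule integral_cong_AE)
  show "AE w in mu. odds w powr l = rho w powr - l"
    using ellipticity
  proof eventually_elim
    case (elim w)
    then have "0 < w" "w < 1" using eps0_pos by linarith+
    then show ?case by (rule rho_powr_minus[symmetric])
  qed
qed measurable

text \<open>Strict nestling to the left: some a0 < 1/2 carries positive mass below it, and there
  rho \<ge> rho a0 > 1.\<close>
lemma rho_nestling:
  assumes "Inf {a. measure mu {w. w \<le> a} > 0} < 1/2"
  obtains A q where "A \<in> sets mu" "0 < prob A" "1 < q" "AE w in mu. w \<in> A \<longrightarrow> q \<le> rho w"
proof -
  have "prob {w. w \<le> 1} = 1" by (rule prob_full) (use eps0_pos in auto)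
  then have "1 \<in> {a. measure mu {w. w \<le> a} > 0}" by simp
  then obtain a0 where a0: "a0 < 1/2" "0 < prob {w. w \<le> a0}"
    using cInf_lessD[OF _ assms] by (metis empty_iff mem_Collect_eq)
  have "eps0 \<le> a0"
  proof (rule ccontr)
    assume "\<not> eps0 \<le> a0"
    then have "prob {w. w \<le> a0} = 0" by (intro prob_null) auto
    then show False using a0 by simp
  qed
  show ?thesis
  proof (rule that[of "{w. w \<le> a0}" "rho a0"])
    show "1 < rho a0" using a0 \<open>eps0 \<le> a0\<close> eps0_pos by (simp add: rho_def field_simps)
    show "AE w in mu. w \<in> {w. w \<le> a0} \<longrightarrow> rho a0 \<le> rho w"
      using ellipticity by eventually_elim (use eps0_pos a0 in \<open>auto intro!: rho_antimono\<close>)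
  qed (use a0 sets_mu in auto)
qed

text \<open>Strict nestling to the right: some a1 > 1/2 carries positive mass above it, and there
  the odds are \<ge> odds a1 > 1.\<close>
lemma odds_nestling:
  assumes "1/2 < Sup {a. measure mu {w. w \<ge> a} > 0}"
  obtains A q where "A \<in> sets mu" "0 < prob A" "1 < q" "AE w in mu. w \<in> A \<longrightarrow> q \<le> odds w"
proof -
  have "prob {w. w \<ge> eps0} = 1" by (rule prob_full) auto
  then have "eps0 \<in> {a. measure mu {w. w \<ge> a} > 0}" by simp
  then obtain a1 where a1: "1/2 < a1" "0 < prob {w. w \<ge> a1}"
    using less_cSupD[OF _ assms] by (metis empty_iff mem_Collect_eq)
  have "a1 \<le> 1 - eps0"
  proof (rule ccontr)
    assume "\<not> a1 \<le> 1 - eps0"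
    then have "prob {w. w \<ge> a1} = 0" by (intro prob_null) auto
    then show False using a1 by simp
  qed
  show ?thesis
  proof (rule that[of "{w. w \<ge> a1}" "odds a1"])
    show "1 < odds a1" using a1 \<open>a1 \<le> 1 - eps0\<close> eps0_pos by (simp add: odds_def field_simps)
    show "AE w in mu. w \<in> {w. w \<ge> a1} \<longrightarrow> odds a1 \<le> odds w"
      using ellipticity by eventually_elim (use eps0_pos a1 in \<open>auto intro!: odds_mono\<close>)
  qed (use a1 sets_mu in auto)
qed

lemma kappa_r_supporting_line:
  assumes "Inf {a. measure mu {w. w \<le> a} > 0} < 1/2" and p: "0 < p" "p < 1"
  shows "0 < kappa_r mu p \<and> Erho mu (kappa_r mu p) = 1 / (1 - p) \<and>
    (\<exists>m>0. \<forall>l. ln (1 / (1 - p)) + (l - kappa_r mu p) * m \<le> ln (Erho mu l))"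
proof -
  obtain A q where nest: "A \<in> sets mu" "0 < prob A" "1 < q" "AE w in mu. w \<in> A \<longrightarrow> q \<le> rho w"
    using rho_nestling[OF assms(1)] .
  have a: "1 < 1 / (1 - p)" using p by simp
  show ?thesis
  proof (rule rho.moment_level[OF nest a])
    fix k m
    assume k: "0 < k" "rho.moment k = 1 / (1 - p)"
        "\<And>k'. 0 < k' \<Longrightarrow> rho.moment k' = 1 / (1 - p) \<Longrightarrow> k' = k"
      and m: "0 < m" "\<And>l. ln (1 / (1 - p)) + (l - k) * m \<le> ln (rho.moment l)"
    have root: "Erho mu k = 1 / (1 - p)" using k(2) by (simp add: rho_moment)
    have kappa: "kappa_r mu p = k"
      unfolding kappa_r_def
    proof (rule the_equality)
      show "0 < k \<and> Erho mu k = 1 / (1 - p)" using k(1) root ..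
      show "k' = k" if "0 < k' \<and> Erho mu k' = 1 / (1 - p)" for k'
        using k(3)[of k'] that unfolding rho_moment by blast
    qed
    show ?thesis
      using k(1) m(1) root m(2)[unfolded rho_moment] unfolding kappa by blast
  qed
qed

lemma kappa_l_supporting_line:
  assumes "1/2 < Sup {a. measure mu {w. w \<ge> a} > 0}" and p: "0 < p" "p < 1"
  shows "0 < kappa_l mu p \<and> Erho mu (- kappa_l mu p) = 1 / (1 - p) \<and>
    (\<exists>m>0. \<forall>l. ln (1 / (1 - p)) + (l - kappa_l mu p) * m \<le> ln (Erho mu (- l)))"
proof -
  obtain A q where nest: "A \<in> sets mu" "0 < prob A" "1 < q" "AE w in mu. w \<in> A \<longrightarrow> q \<le> odds w"
    using odds_nestling[OF assms(1)] .
  have a: "1 < 1 / (1 - p)" using p by simp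
  show ?thesis
  proof (rule odds.moment_level[OF nest a])
    fix k m
    assume k: "0 < k" "odds.moment k = 1 / (1 - p)"
        "\<And>k'. 0 < k' \<Longrightarrow> odds.moment k' = 1 / (1 - p) \<Longrightarrow> k' = k"
      and m: "0 < m" "\<And>l. ln (1 / (1 - p)) + (l - k) * m \<le> ln (odds.moment l)"
    have root: "Erho mu (- k) = 1 / (1 - p)" using k(2) by (simp add: odds_moment)
    have kappa: "kappa_l mu p = k"
      unfolding kappa_l_def
    proof (rule the_equality)
      show "0 < k \<and> Erho mu (- k) = 1 / (1 - p)" using k(1) root ..
      show "k' = k" if "0 < k' \<and> Erho mu (- k') = 1 / (1 - p)" for k'
        using k(3)[of k'] that unfolding odds_moment by blast
    qed
    show ?thesis
      using k(1) m(1) root m(2)[unfolded odds_moment] unfolding kappa by blast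
  qed
qed

end

theorem lemma3p2:
  fixes mu :: "real measure" and eps0 p h :: real
  assumes "prob_space mu"
    and "sets mu = sets borel"
    and "eps0 > 0"
    and "AE w in mu. eps0 \<le> w \<and> w \<le> 1 - eps0"
    and "Inf {a. measure mu {w. w \<le> a} > 0} < 1/2"
    and "1/2 < Sup {a. measure mu {w. w \<ge> a} > 0}"
    and "0 < p" and "p < 1"
    and "h > 0"
  shows "psi_tilde mu p h = ereal ((kappa_l mu p + kappa_r mu p) * h)"
proof -
  interpret elliptic_environment mu eps0
    using assms(1-4) by (simp add: elliptic_environment_def elliptic_environment_axioms_def)
  have c: "ln (1 / (1 - p)) = - ln (1 - p)" using assms(7,8) by (simp add: ln_div)
  note right = kappa_r_supporting_line[OF assms(5,7,8), unfolded c]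
  note left = kappa_l_supporting_line[OF assms(6,7,8), unfolded c]
  obtain mr where mr: "0 < mr" "\<And>l. - ln (1 - p) + (l - kappa_r mu p) * mr \<le> ln (Erho mu l)"
    using right by blast
  obtain ml where ml: "0 < ml" "\<And>l. - ln (1 - p) + (l - kappa_l mu p) * ml \<le> ln (Erho mu (- l))"
    using left by blast
  show ?thesis
    by (rule psi_tilde_from_supporting_lines[OF assms(9) _ _ ml(1) mr(1) _ ml(2) _ mr(2)])
      (use left right c in simp_all)
qed

end
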